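(* Let $n$ be even and let $\mathrm{TH}_{n/2}:\{0,1\}^n\rightarrow\{0,1\}$ be defined by $\mathrm{TH}_{n/2}(x)=1$ iff $|x|>n/2$. Then $WUC(\mathrm{TH}_{n/2})=O(\log n)$ while $\overline{s}(\mathrm{TH}_{n/2})=\Omega(\sqrt{n})$.
   Context: $|x|$ is the Hamming weight. A classical randomized query algorithm adaptively queries input bits $x_i$ (each query costs one) and outputs a bit; for an algorithm whose minimum over inputs of the probability of outputting $f(x)$ is $p>1/2$, its bias is $\beta=p-1/2$ and its weakly unbounded cost is (number of queries) $+\log(1/(2\beta))$; $WUC(f)$ is the minimum weakly unbounded cost over classical randomized algorithms. The sensitivity of $f$ at $x$ is $s_x(f)=\sum_{i\in[n]}|f(x)-f(x\oplus e_i)|$, where $e_i$ has a 1 exactly in position $i$, and the average sensitivity is $\overline{s}(f)=2^{-n}\sum_{x\in\{0,1\}^n}s_x(f)$. $\log$ is base 2. *)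

theory Defs
  imports "HOL-Probability.Probability"
begin

text \<open>Inputs in {0,1}^n are boolean lists of length n; True encodes the bit 1.\<close>

definition inputs :: "nat \<Rightarrow> bool list set" where
  "inputs n = {x. length x = n}"

definition hweight :: "bool list \<Rightarrow> nat" where
  "hweight x = length (filter id x)"

definition TH :: "nat \<Rightarrow> bool list \<Rightarrow> bool" where
  "TH n x \<longleftrightarrow> real (hweight x) > real n / 2"

datatype dtree = Leaf bool | Node nat dtree dtree

fun dt_eval :: "dtree \<Rightarrow> bool list \<Rightarrow> bool" where
  "dt_eval (Leaf b) x = b"
| "dt_eval (Node i l r) x = (if x ! i then dt_eval r x else dt_eval l x)"

fun dt_queries :: "dtree \<Rightarrow> bool list \<Rightarrow> nat" where
  "dt_queries (Leaf b) x = 0"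
| "dt_queries (Node i l r) x = Suc (dt_queries (if x ! i then r else l) x)"

fun dt_valid :: "nat \<Rightarrow> dtree \<Rightarrow> bool" where
  "dt_valid n (Leaf b) = True"
| "dt_valid n (Node i l r) = (i < n \<and> dt_valid n l \<and> dt_valid n r)"

text \<open>A classical randomized query algorithm is a probability distribution over
  deterministic decision trees (randomness may be fixed in advance).\<close>
definition succ_prob :: "dtree pmf \<Rightarrow> (bool list \<Rightarrow> bool) \<Rightarrow> bool list \<Rightarrow> real" where
  "succ_prob P f x = measure_pmf.prob P {T. dt_eval T x = f x}"

definition min_succ :: "nat \<Rightarrow> dtree pmf \<Rightarrow> (bool list \<Rightarrow> bool) \<Rightarrow> real" where
  "min_succ n P f = Min (succ_prob P f ` inputs n)"

text \<open>Weakly unbounded cost of f: infimum over randomized algorithms with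
  positive bias beta = p - 1/2 of (number of queries) + log(1/(2 beta)), where
  the number of queries is the worst case over inputs and random choices.\<close>
definition WUC :: "nat \<Rightarrow> (bool list \<Rightarrow> bool) \<Rightarrow> real" where
  "WUC n f = Inf {real q + log 2 (1 / (2 * (min_succ n P f - 1/2))) | P q.
      (\<forall>T\<in>set_pmf P. dt_valid n T) \<and>
      (\<forall>T\<in>set_pmf P. \<forall>x\<in>inputs n. dt_queries T x \<le> q) \<and>
      min_succ n P f > 1/2}"

definition sens_at :: "nat \<Rightarrow> (bool list \<Rightarrow> bool) \<Rightarrow> bool list \<Rightarrow> nat" where
  "sens_at n f x = card {i. i < n \<and> f x \<noteq> f (x[i := \<not> x ! i])}"

definition avg_sens :: "nat \<Rightarrow> (bool list \<Rightarrow> bool) \<Rightarrow> real" where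
  "avg_sens n f = (\<Sum>x\<in>inputs n. real (sens_at n f x)) / 2 ^ n"

end

theory Submission
  imports Defs
begin

text \<open>Upper bound: query a uniformly random position k \<in> {0..n}, answering x_k, or
  answering 0 without a query when k = n. For even n at least n/2 + 1 of the n + 1 choices
  give TH(x), so a single query achieves bias 1/(2(n+1)) and cost 1 + log (n + 1).
  Lower bound: flipping any zero of an input in the middle layer |x| = n/2 changes TH, so
  each of its (n choose n/2) \<ge> 2^n / sqrt (2n) elements has sensitivity n/2, and the
  average sensitivity is at least sqrt n / (2 sqrt 2).\<close>

lemma finite_inputs: "finite (inputs n)"
  unfolding inputs_def using finite_lists_length_eq[of "UNIV :: bool set" n] by simp

lemma inputs_nonempty: "inputs n \<noteq> {}"
  by (auto simp: inputs_def intro: exI[of _ "replicate n False"])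

lemma hweight_Nil [simp]: "hweight [] = 0"
  by (simp add: hweight_def)

lemma hweight_Cons [simp]: "hweight (b # x) = (if b then Suc (hweight x) else hweight x)"
  by (simp add: hweight_def)

lemma hweight_eq_card: "hweight x = card {i. i < length x \<and> x ! i}"
  by (simp add: hweight_def length_filter_conv_card)

lemma hweight_pos: "i < length x \<Longrightarrow> x ! i \<Longrightarrow> 0 < hweight x"
  by (auto simp: hweight_eq_card card_gt_0_iff)

lemma hweight_flip:
  "i < length x \<Longrightarrow> hweight (x[i := \<not> x ! i]) = (if x ! i then hweight x - 1 else Suc (hweight x))"
proof (induction x arbitrary: i)
  case (Cons b x)
  show ?case
  proof (cases i)
    case (Suc j)
    with Cons.prems have "j < length x"
      by simp
    with Cons.IH[OF this] Suc show ?thesis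
      by (auto dest: hweight_pos)
  qed simp
qed simp

lemma card_layer: "card {x :: bool list. length x = n \<and> hweight x = k} = n choose k"
proof -
  have ones_of_indicator: "{i. i < n \<and> map (\<lambda>i. i \<in> B) [0..<n] ! i} = B" if "B \<subseteq> {..<n}" for B
    using that by auto
  have "bij_betw (\<lambda>x. {i. i < n \<and> x ! i}) {x. length x = n \<and> hweight x = k}
          {B. B \<subseteq> {..<n} \<and> card B = k}"
    by (rule bij_betw_byWitness[where f' = "\<lambda>B. map (\<lambda>i. i \<in> B) [0..<n]"])
       (auto simp: hweight_eq_card ones_of_indicator intro: nth_equalityI)
  then show ?thesis
    by (simp add: bij_betw_same_card n_subsets)
qed

lemma central_binomial_Suc:
  "Suc m * (2 * Suc m choose Suc m) = 2 * (2 * m + 1) * (2 * m choose m)"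
proof -
  let ?b = "Suc (2 * m) choose m"
  have absorb_top: "Suc m * (2 * Suc m choose Suc m) = 2 * Suc m * ?b"
    using Suc_times_binomial[of m "Suc (2 * m)"] by (simp del: binomial_Suc_Suc)
  have absorb_bottom: "Suc m * ?b = Suc (2 * m) * (2 * m choose m)"
    using Suc_times_binomial_eq[of "2 * m" m] binomial_symmetric[of "Suc m" "Suc (2 * m)"]
    by (simp del: binomial_Suc_Suc)
  have "Suc m * (Suc m * (2 * Suc m choose Suc m)) = Suc m * (2 * Suc m * ?b)"
    by (simp only: absorb_top)
  also have "\<dots> = 2 * Suc m * (Suc m * ?b)"
    by (simp only: mult_ac)
  also have "\<dots> = 2 * Suc m * (Suc (2 * m) * (2 * m choose m))"
    by (simp only: absorb_bottom)
  also have "\<dots> = Suc m * (2 * (2 * m + 1) * (2 * m choose m))"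
    by (simp only: mult_ac) simp
  finally show ?thesis
    by (rule mult_left_cancel[THEN iffD1, rotated]) simp
qed

lemma central_binomial_sq_lower_bound: "0 < m \<Longrightarrow> 16 ^ m \<le> 4 * m * (2 * m choose m)\<^sup>2"
proof (induction m rule: nat_induct_non_zero)
  case (Suc m)
  let ?c = "2 * m choose m" and ?d = "2 * Suc m choose Suc m"
  have "4 * m * Suc m \<le> (2 * m + 1)\<^sup>2"
    by (simp add: power2_eq_square)
  then have growth: "16 * ?c\<^sup>2 * (4 * m * Suc m) \<le> 16 * ?c\<^sup>2 * (2 * m + 1)\<^sup>2"
    by (rule mult_le_mono2)
  have "16 ^ Suc m * Suc m \<le> 16 * (4 * m * ?c\<^sup>2) * Suc m"
    using mult_le_mono1[OF Suc.IH, of "16 * Suc m"] by (simp only: power_Suc mult_ac)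
  also have "\<dots> \<le> 4 * (2 * (2 * m + 1) * ?c)\<^sup>2"
    using growth by (simp only: power_mult_distrib mult_ac) simp
  also have "\<dots> = 4 * (Suc m * ?d)\<^sup>2"
    by (simp only: central_binomial_Suc)
  also have "\<dots> = 4 * Suc m * ?d\<^sup>2 * Suc m"
    by (simp only: power2_eq_square mult_ac)
  finally show ?case
    by (metis mult_le_cancel2 zero_less_Suc)
qed simp

lemma card_zeros: "card {i. i < length x \<and> \<not> x ! i} = length x - hweight x"
proof -
  have "{i. i < length x \<and> \<not> x ! i} = {..<length x} - {i. i < length x \<and> x ! i}"
    by auto
  then show ?thesis
    using card_Diff_subset[of "{i. i < length x \<and> x ! i}" "{..<length x}"]
    by (auto simp: hweight_eq_card)
qed

lemma sens_at_TH_middle_layer: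
  assumes "length x = 2 * m" and "hweight x = m"
  shows "sens_at (2 * m) (TH (2 * m)) x = m"
proof -
  have flip_changes_TH: "TH (2 * m) x \<noteq> TH (2 * m) (x[i := \<not> x ! i]) \<longleftrightarrow> \<not> x ! i"
    if "i < 2 * m" for i
    using hweight_flip[of i x] that assms by (auto simp: TH_def)
  have "sens_at (2 * m) (TH (2 * m)) x = card {i. i < length x \<and> \<not> x ! i}"
    unfolding sens_at_def assms(1) using flip_changes_TH by (metis (lifting))
  with card_zeros[of x] assms show ?thesis
    by simp
qed

lemma avg_sens_TH_lower_bound:
  "real (2 * m choose m) * m / 4 ^ m \<le> avg_sens (2 * m) (TH (2 * m))"
proof -
  let ?layer = "{x. length x = 2 * m \<and> hweight x = m}"
  have "real (2 * m choose m) * m = (\<Sum>x\<in>?layer. real (sens_at (2 * m) (TH (2 * m)) x))"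
    by (simp add: sens_at_TH_middle_layer flip: card_layer)
  also have "\<dots> \<le> (\<Sum>x\<in>inputs (2 * m). real (sens_at (2 * m) (TH (2 * m)) x))"
    by (rule sum_mono2[OF finite_inputs]) (auto simp: inputs_def)
  finally show ?thesis
    unfolding avg_sens_def by (simp add: power_mult divide_right_mono)
qed

lemma avg_sens_TH_ge_sqrt:
  assumes "2 \<le> n" and "even n"
  shows "sqrt (real n) / 4 \<le> avg_sens n (TH n)"
proof -
  obtain m where n: "n = 2 * m" and "0 < m"
    using assms by (auto elim!: evenE)
  define a where "a = real (2 * m choose m) * m / 4 ^ m"
  have "16 ^ m \<le> 4 * m * (real (2 * m choose m))\<^sup>2"
    using central_binomial_sq_lower_bound[OF \<open>0 < m\<close>]
    by (metis of_nat_le_iff of_nat_mult of_nat_power of_nat_numeral)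
  then have "m * 16 ^ m \<le> 4 * (real (2 * m choose m) * m)\<^sup>2"
    by (simp add: mult_left_mono power2_eq_square algebra_simps)
  moreover have "a\<^sup>2 = (real (2 * m choose m) * m)\<^sup>2 / 16 ^ m"
    by (simp add: a_def power_divide power2_eq_square flip: power_mult_distrib)
  ultimately have "real m * 16 ^ m \<le> 4 * a\<^sup>2 * 16 ^ m"
    by simp
  then have "real m \<le> 4 * a\<^sup>2"
    by simp
  then have "(sqrt (real n) / 4)\<^sup>2 \<le> a\<^sup>2"
    by (simp add: n power_divide)
  then have "sqrt (real n) / 4 \<le> a"
    by (rule power2_le_imp_le) (simp add: a_def)
  also have "a \<le> avg_sens n (TH n)"
    unfolding a_def n by (rule avg_sens_TH_lower_bound)
  finally show ?thesis .
qed

lemma le_min_succ_iff: "p \<le> min_succ n P f \<longleftrightarrow> (\<forall>x\<in>inputs n. p \<le> succ_prob P f x)"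
  unfolding min_succ_def using finite_inputs inputs_nonempty by simp

lemma min_succ_le_1: "min_succ n P f \<le> 1"
proof -
  have "min_succ n P f \<in> succ_prob P f ` inputs n"
    unfolding min_succ_def using finite_inputs inputs_nonempty by (intro Min_in) auto
  then show ?thesis
    by (auto simp: succ_prob_def)
qed

lemma WUC_le_cost:
  assumes valid: "\<forall>T\<in>set_pmf P. dt_valid n T"
    and queries: "\<forall>T\<in>set_pmf P. \<forall>x\<in>inputs n. dt_queries T x \<le> q"
    and success: "\<forall>x\<in>inputs n. p \<le> succ_prob P f x"
    and "1/2 < p"
  shows "WUC n f \<le> q + log 2 (1 / (2 * (p - 1/2)))"
proof -
  let ?cost = "\<lambda>P q. real q + log 2 (1 / (2 * (min_succ n P f - 1/2)))"
  have p: "p \<le> min_succ n P f"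
    using success by (simp add: le_min_succ_iff)
  have "WUC n f \<le> ?cost P q"
    unfolding WUC_def
  proof (rule cInf_lower)
    show "?cost P q \<in> {?cost P q | P q. (\<forall>T\<in>set_pmf P. dt_valid n T) \<and>
        (\<forall>T\<in>set_pmf P. \<forall>x\<in>inputs n. dt_queries T x \<le> q) \<and> 1/2 < min_succ n P f}"
      using valid queries p \<open>1/2 < p\<close> by (intro CollectI exI[of _ P] exI[of _ q]) auto
    have "0 \<le> ?cost P q" if "1/2 < min_succ n P f" for P q
      using that min_succ_le_1[of n P f] by (simp add: field_simps)
    then show "bdd_below {?cost P q | P q. (\<forall>T\<in>set_pmf P. dt_valid n T) \<and>
        (\<forall>T\<in>set_pmf P. \<forall>x\<in>inputs n. dt_queries T x \<le> q) \<and> 1/2 < min_succ n P f}"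
      by (intro bdd_belowI[of _ 0]) auto
  qed
  also have "\<dots> \<le> q + log 2 (1 / (2 * (p - 1/2)))"
    using p \<open>1/2 < p\<close> by (simp add: field_simps)
  finally show ?thesis .
qed

definition query_bit :: "nat \<Rightarrow> nat \<Rightarrow> dtree" where
  "query_bit n k = (if k < n then Node k (Leaf False) (Leaf True) else Leaf False)"

definition random_query :: "nat \<Rightarrow> dtree pmf" where
  "random_query n = map_pmf (query_bit n) (pmf_of_set {0..n})"

lemma card_correct_query_bits:
  assumes "even n" and "length x = n"
  shows "n div 2 + 1 \<le> card {k \<in> {0..n}. dt_eval (query_bit n k) x = TH n x}"
proof (cases "TH n x")
  case True
  then have "{k \<in> {0..n}. dt_eval (query_bit n k) x = TH n x} = {k. k < length x \<and> x ! k}"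
    using assms by (auto simp: query_bit_def)
  with True assms show ?thesis
    by (auto simp: TH_def hweight_eq_card elim!: evenE)
next
  case False
  then have "{k \<in> {0..n}. dt_eval (query_bit n k) x = TH n x} = insert n {k. k < length x \<and> \<not> x ! k}"
    using assms by (auto simp: query_bit_def)
  with False assms card_zeros[of x] show ?thesis
    by (auto simp: TH_def elim!: evenE)
qed

lemma succ_prob_random_query:
  assumes "even n" and "x \<in> inputs n"
  shows "(real n + 2) / (2 * (real n + 1)) \<le> succ_prob (random_query n) (TH n) x"
proof -
  let ?good = "{k \<in> {0..n}. dt_eval (query_bit n k) x = TH n x}"
  have "succ_prob (random_query n) (TH n) x = card ?good / (real n + 1)"
    unfolding succ_prob_def random_query_def
    by (simp add: measure_pmf_of_set vimage_def Int_def conj_commute)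
  moreover have "real n + 2 \<le> 2 * card ?good"
    using card_correct_query_bits[of n x] assms by (auto simp: inputs_def elim!: evenE)
  ultimately show ?thesis
    by (simp add: field_simps)
qed

lemma WUC_TH_le:
  assumes "even n"
  shows "WUC n (TH n) \<le> 1 + log 2 (real n + 1)"
proof -
  let ?p = "(real n + 2) / (2 * (real n + 1))"
  have "WUC n (TH n) \<le> real 1 + log 2 (1 / (2 * (?p - 1/2)))"
  proof (rule WUC_le_cost)
    show "\<forall>T\<in>set_pmf (random_query n). dt_valid n T"
      and "\<forall>T\<in>set_pmf (random_query n). \<forall>x\<in>inputs n. dt_queries T x \<le> 1"
      by (auto simp: random_query_def query_bit_def)
    show "\<forall>x\<in>inputs n. ?p \<le> succ_prob (random_query n) (TH n) x"
      using succ_prob_random_query assms by blast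
  qed (simp add: field_simps)
  moreover have "2 * (?p - 1/2) = 1 / (real n + 1)"
    by (simp add: field_simps)
  ultimately show ?thesis
    by simp
qed

lemma WUC_TH_le_log:
  assumes "2 \<le> n" and "even n"
  shows "WUC n (TH n) \<le> 3 * log 2 (real n)"
proof -
  have "WUC n (TH n) \<le> 1 + log 2 (real n + 1)"
    using \<open>even n\<close> by (rule WUC_TH_le)
  also have "\<dots> \<le> 1 + log 2 (2 * real n)"
    using \<open>2 \<le> n\<close> by (intro add_left_mono log_mono) auto
  also have "\<dots> = 2 + log 2 (real n)"
    using \<open>2 \<le> n\<close> by (simp add: log_mult)
  also have "\<dots> \<le> 3 * log 2 (real n)"
    using \<open>2 \<le> n\<close> by (simp add: le_log_iff)
  finally show ?thesis .
qed

theorem lemma11: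
  shows "(\<exists>C N. C > 0 \<and> (\<forall>n\<ge>N. even n \<longrightarrow> WUC n (TH n) \<le> C * log 2 (real n)))
       \<and> (\<exists>c N. c > 0 \<and> (\<forall>n\<ge>N. even n \<longrightarrow> avg_sens n (TH n) \<ge> c * sqrt (real n)))"
proof
  show "\<exists>C N. C > 0 \<and> (\<forall>n\<ge>N. even n \<longrightarrow> WUC n (TH n) \<le> C * log 2 (real n))"
    using WUC_TH_le_log by (intro exI[of _ 3] exI[of _ 2]) auto
  show "\<exists>c N. c > 0 \<and> (\<forall>n\<ge>N. even n \<longrightarrow> avg_sens n (TH n) \<ge> c * sqrt (real n))"
    using avg_sens_TH_ge_sqrt by (intro exI[of _ "1/4"] exI[of _ 2]) auto
qed

end
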